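(* Consider the Normal Partizan Domination game on a star $K_{1,n}$ whose universal (center) vertex has color $C$, with $a$ leaves of color $A$, $b$ leaves of color $B$ and $c=n-a-b\geq 1$ leaves of color $C$, where $a+b\geq 1$. If $c$ is even, the value equals the value of the game on the star obtained by removing the $c$ leaves of color $C$. If $c$ is odd: if $a=b$ the value is $*$; if $|a-b|=1$ the value is $*2$; if $a\geq b+2$ the value is $\left\{0,\uparrow^{[a-b-1]}*\ \big|\ 0,\uparrow^{[a-b-1]}*\right\}$; if $b\geq a+2$ the value is $\left\{0,\downarrow_{[b-a-1]}*\ \big|\ 0,\downarrow_{[b-a-1]}*\right\}$.
   Context: Normal Partizan Domination game: a finite graph $G$ has each vertex colored $A$, $B$ or $C$. Alice and Bob alternately select a vertex; Alice may only select vertices colored $A$ or $C$, Bob only vertices colored $B$ or $C$. A vertex $u$ dominates $v$ if $u=v$ or $uv$ is an edge. A vertex may be selected only if it is playable, i.e. it dominates at least one vertex not dominated by the previously selected vertices; the game ends when the selected vertices form a dominating set. Under normal play the player unable to move loses. The game is regarded as a partizan combinatorial game with Alice as Left and Bob as Right, and its value is its value in Conway's combinatorial game theory ($\{X\mid Y\}$ has Left options $X$ and Right options $Y$; $G=H$ iff $G+(-H)$ is a second-player win). Notation: $*=\{0\mid 0\}$, $*2=\{0,*\mid 0,*\}$, $\uparrow=\{0\mid *\}$, $\downarrow=\{*\mid 0\}$; $\uparrow^{[1]}=\uparrow$, $\uparrow^{[m]}=\{\uparrow^{[m-1]}\mid *\}$ for $m\geq 2$; $\downarrow_{[1]}=\downarrow$,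 $\downarrow_{[m]}=\{*\mid \downarrow_{[m-1]}\}$ for $m\geq 2$; $J*$ denotes $J+*$. *)

theory Defs
  imports Main
begin

datatype pg = G "pg list" "pg list"   (* G lefts rights = {lefts | rights} *)

fun gplus :: "pg \<Rightarrow> pg \<Rightarrow> pg" where
  "gplus (G ls rs) (G ls' rs') =
     G (map (\<lambda>x. gplus x (G ls' rs')) ls @ map (\<lambda>y. gplus (G ls rs) y) ls')
       (map (\<lambda>x. gplus x (G ls' rs')) rs @ map (\<lambda>y. gplus (G ls rs) y) rs')"

primrec gneg :: "pg \<Rightarrow> pg" where
  "gneg (G ls rs) = G (map gneg rs) (map gneg ls)"

text \<open>wins g = (Left wins moving first, Right wins moving first), normal play.\<close>
primrec wins :: "pg \<Rightarrow> bool \<times> bool" where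
  "wins (G ls rs) = ((\<exists>p \<in> set (map wins ls). \<not> snd p), (\<exists>p \<in> set (map wins rs). \<not> fst p))"

definition second_player_win :: "pg \<Rightarrow> bool" where
  "second_player_win g \<longleftrightarrow> \<not> fst (wins g) \<and> \<not> snd (wins g)"

definition game_eq :: "pg \<Rightarrow> pg \<Rightarrow> bool" (infix "=\<^sub>g" 50) where
  "g =\<^sub>g h \<longleftrightarrow> second_player_win (gplus g (gneg h))"

definition zero_g :: pg where "zero_g = G [] []"
definition star_g :: pg where "star_g = G [zero_g] [zero_g]"
definition star2_g :: pg where "star2_g = G [zero_g, star_g] [zero_g, star_g]"
definition up_g :: pg where "up_g = G [zero_g] [star_g]"
definition down_g :: pg where "down_g = G [star_g] [zero_g]"

text \<open>up_pow m = \<up>^[m], down_pow m = \<down>_[m], for m \<ge> 1 (value at 0 is irrelevant).\<close>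
fun up_pow :: "nat \<Rightarrow> pg" where
  "up_pow 0 = zero_g"
| "up_pow (Suc 0) = up_g"
| "up_pow (Suc (Suc m)) = G [up_pow (Suc m)] [star_g]"

fun down_pow :: "nat \<Rightarrow> pg" where
  "down_pow 0 = zero_g"
| "down_pow (Suc 0) = down_g"
| "down_pow (Suc (Suc m)) = G [star_g] [down_pow (Suc m)]"

datatype color = ColA | ColB | ColC

text \<open>Graph on vertices 0..<N, with adjacency relation adj (symmetric, irreflexive).
  Closed neighbourhood restricted to the vertex set.\<close>
definition cnbhd :: "nat \<Rightarrow> (nat \<Rightarrow> nat \<Rightarrow> bool) \<Rightarrow> nat \<Rightarrow> nat set" where
  "cnbhd N adj v = {u. u < N \<and> (u = v \<or> adj v u)}"

text \<open>Position = set D of vertices dominated so far; a vertex is playable iff its closed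
  neighbourhood is not contained in D.  The first argument is a move budget (fuel); every
  move adds a new vertex to D \<subseteq> {0..<N}, so N moves suffice to reach the end.\<close>
primrec dom_pos :: "nat \<Rightarrow> nat \<Rightarrow> (nat \<Rightarrow> nat \<Rightarrow> bool) \<Rightarrow> (nat \<Rightarrow> color) \<Rightarrow> nat set \<Rightarrow> pg" where
  "dom_pos 0 N adj col D = G [] []"
| "dom_pos (Suc k) N adj col D =
     G (map (\<lambda>v. dom_pos k N adj col (D \<union> cnbhd N adj v))
          (filter (\<lambda>v. col v \<in> {ColA, ColC} \<and> \<not> cnbhd N adj v \<subseteq> D) [0..<N]))
       (map (\<lambda>v. dom_pos k N adj col (D \<union> cnbhd N adj v))
          (filter (\<lambda>v. col v \<in> {ColB, ColC} \<and> \<not> cnbhd N adj v \<subseteq> D) [0..<N]))"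

definition dom_game :: "nat \<Rightarrow> (nat \<Rightarrow> nat \<Rightarrow> bool) \<Rightarrow> (nat \<Rightarrow> color) \<Rightarrow> pg" where
  "dom_game N adj col = dom_pos N N adj col {}"

definition star_adj :: "nat \<Rightarrow> nat \<Rightarrow> bool" where
  "star_adj u v \<longleftrightarrow> (u = 0 \<and> v \<noteq> 0) \<or> (v = 0 \<and> u \<noteq> 0)"

definition star_col :: "nat \<Rightarrow> nat \<Rightarrow> nat \<Rightarrow> color" where
  "star_col a b v = (if v = 0 then ColC else if v \<le> a then ColA else if v \<le> a + b then ColB else ColC)"

definition star_game :: "nat \<Rightarrow> nat \<Rightarrow> nat \<Rightarrow> pg" where
  "star_game a b c = dom_game (a + b + c + 1) star_adj (star_col a b)"

end

(*
  A position of the domination game on the star is determined by its set of undominated leaves: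
  the centre stays playable while some leaf is undominated and playing it ends the game, whereas
  playing a leaf dominates just that leaf. So the value depends only on the numbers of undominated
  A-, B- and C-leaves and is the recursively defined game leaf_game a b c.

  In leaf_game an A-leaf and a B-leaf cancel, since each player can answer the opponent's private
  move by his own, and two C-leaves cancel unless nothing else is left. So only a - b and the
  parity of c matter, apart from leaf_game 0 0 2 = leaf_game 1 1 0 = *2 in the balanced case.
  Finally leaf_game (m + 1) 0 0 = up^[m] + *, and in leaf_game d 0 1 Left's move to
  leaf_game (d - 1) 0 1 is dominated by the move to leaf_game d 0 0, which gives the odd case.
  Negation swaps A and B.
*)
theory Submission
  imports Defs
begin

section \<open>Conway's order on games\<close>

fun left_opts :: "pg \<Rightarrow> pg list" where
  "left_opts (G ls rs) = ls"

fun right_opts :: "pg \<Rightarrow> pg list" where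
  "right_opts (G ls rs) = rs"

lemma size_left_opt: "x \<in> set (left_opts g) \<Longrightarrow> size x < size g"
  by (cases g) (auto simp: less_Suc_eq_le trans_le_add1 size_list_estimation')

lemma size_right_opt: "x \<in> set (right_opts g) \<Longrightarrow> size x < size g"
  by (cases g) (auto simp: less_Suc_eq_le trans_le_add2 size_list_estimation')

function game_le :: "pg \<Rightarrow> pg \<Rightarrow> bool" (infix "\<le>\<^sub>g" 50) where
  "x \<le>\<^sub>g y \<longleftrightarrow> (\<forall>l \<in> set (left_opts x). \<not> y \<le>\<^sub>g l) \<and> (\<forall>r \<in> set (right_opts y). \<not> r \<le>\<^sub>g x)"
  by auto
termination
  by (relation "measure (\<lambda>(x, y). size x + size y)") (auto dest: size_left_opt size_right_opt)

declare game_le.simps [simp del]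

lemma wins_gplus_gneg:
  "(\<not> fst (wins (gplus x (gneg y))) \<longleftrightarrow> x \<le>\<^sub>g y) \<and> (\<not> snd (wins (gplus x (gneg y))) \<longleftrightarrow> y \<le>\<^sub>g x)"
proof (induction "size x + size y" arbitrary: x y rule: less_induct)
  case less
  obtain xl xr where x: "x = G xl xr" by (cases x)
  obtain yl yr where y: "y = G yl yr" by (cases y)
  have split: "gplus x (gneg y) = G (map (\<lambda>l. gplus l (gneg y)) xl @ map (\<lambda>r. gplus x (gneg r)) yr)
        (map (\<lambda>r. gplus r (gneg y)) xr @ map (\<lambda>l. gplus x (gneg l)) yl)"
    by (simp add: x y)
  have "\<not> snd (wins (gplus l (gneg y))) \<longleftrightarrow> y \<le>\<^sub>g l" if "l \<in> set xl" for l
    using less size_left_opt[of l x] that x by auto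
  moreover have "\<not> snd (wins (gplus x (gneg r))) \<longleftrightarrow> r \<le>\<^sub>g x" if "r \<in> set yr" for r
    using less size_right_opt[of r y] that y by auto
  moreover have "\<not> fst (wins (gplus r (gneg y))) \<longleftrightarrow> r \<le>\<^sub>g y" if "r \<in> set xr" for r
    using less size_right_opt[of r x] that x by auto
  moreover have "\<not> fst (wins (gplus x (gneg l))) \<longleftrightarrow> x \<le>\<^sub>g l" if "l \<in> set yl" for l
    using less size_left_opt[of l y] that y by auto
  ultimately show ?case
    by (subst (1 2) split, subst (1 2) game_le.simps) (auto simp: x y)
qed

lemma game_eq_iff_le: "x =\<^sub>g y \<longleftrightarrow> x \<le>\<^sub>g y \<and> y \<le>\<^sub>g x"
  unfolding game_eq_def second_player_win_def using wins_gplus_gneg by blast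

lemma not_le_if_le_left_opt: "l \<in> set (left_opts x) \<Longrightarrow> y \<le>\<^sub>g l \<Longrightarrow> \<not> x \<le>\<^sub>g y"
  by (subst game_le.simps) auto

lemma not_le_if_right_opt_le: "r \<in> set (right_opts y) \<Longrightarrow> r \<le>\<^sub>g x \<Longrightarrow> \<not> x \<le>\<^sub>g y"
  by (subst game_le.simps) auto

lemma game_le_refl: "x \<le>\<^sub>g x"
proof (induction x)
  case (G ls rs)
  show ?case
  proof (subst game_le.simps, intro conjI ballI notI)
    fix l assume "l \<in> set (left_opts (G ls rs))" "G ls rs \<le>\<^sub>g l"
    then show False using G.IH(1) not_le_if_le_left_opt by auto
  next
    fix r assume "r \<in> set (right_opts (G ls rs))" "r \<le>\<^sub>g G ls rs"
    then show False using G.IH(2) not_le_if_right_opt_le by auto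
  qed
qed

lemma not_le_left_opt: "l \<in> set (left_opts g) \<Longrightarrow> \<not> g \<le>\<^sub>g l"
  using not_le_if_le_left_opt game_le_refl by blast

lemma not_right_opt_le: "r \<in> set (right_opts g) \<Longrightarrow> \<not> r \<le>\<^sub>g g"
  using not_le_if_right_opt_le game_le_refl by blast

lemma game_le_trans: "x \<le>\<^sub>g y \<Longrightarrow> y \<le>\<^sub>g z \<Longrightarrow> x \<le>\<^sub>g z"
proof (induction "size x + size y + size z" arbitrary: x y z rule: less_induct)
  case less
  show ?case
  proof (subst game_le.simps, intro conjI ballI notI)
    fix l assume l: "l \<in> set (left_opts x)" and "z \<le>\<^sub>g l"
    with less.hyps[of y z l] less.prems have "y \<le>\<^sub>g l" using size_left_opt[OF l] by auto
    with l less.prems show False using not_le_if_le_left_opt by blast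
  next
    fix r assume r: "r \<in> set (right_opts z)" and "r \<le>\<^sub>g x"
    with less.hyps[of r x y] less.prems have "r \<le>\<^sub>g y" using size_right_opt[OF r] by auto
    with r less.prems show False using not_le_if_right_opt_le by blast
  qed
qed

lemma game_eq_refl: "x =\<^sub>g x"
  by (simp add: game_eq_iff_le game_le_refl)

lemma game_eq_sym: "x =\<^sub>g y \<Longrightarrow> y =\<^sub>g x"
  by (simp add: game_eq_iff_le)

lemma game_eq_trans [trans]: "x =\<^sub>g y \<Longrightarrow> y =\<^sub>g z \<Longrightarrow> x =\<^sub>g z"
  by (meson game_eq_iff_le game_le_trans)

lemma game_le_by_opts:
  assumes "\<And>l. l \<in> set (left_opts g) \<Longrightarrow> (\<exists>l' \<in> set (left_opts h). l \<le>\<^sub>g l') \<or> \<not> h \<le>\<^sub>g l"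
    and "\<And>r. r \<in> set (right_opts h) \<Longrightarrow> (\<exists>r' \<in> set (right_opts g). r' \<le>\<^sub>g r) \<or> \<not> r \<le>\<^sub>g g"
  shows "g \<le>\<^sub>g h"
proof (subst game_le.simps, intro conjI ballI notI)
  fix l assume l: "l \<in> set (left_opts g)" and "h \<le>\<^sub>g l"
  with assms(1)[OF l] show False
    using not_le_left_opt game_le_trans by metis
next
  fix r assume r: "r \<in> set (right_opts h)" and "r \<le>\<^sub>g g"
  with assms(2)[OF r] show False
    using not_right_opt_le game_le_trans by metis
qed

lemma game_eq_by_opts:
  assumes "\<And>l. l \<in> set (left_opts g) \<Longrightarrow> (\<exists>l' \<in> set (left_opts h). l =\<^sub>g l') \<or> \<not> h \<le>\<^sub>g l"
    and "\<And>r. r \<in> set (right_opts g) \<Longrightarrow> (\<exists>r' \<in> set (right_opts h). r =\<^sub>g r') \<or> \<not> r \<le>\<^sub>g h"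
    and "\<And>l. l \<in> set (left_opts h) \<Longrightarrow> (\<exists>l' \<in> set (left_opts g). l =\<^sub>g l') \<or> \<not> g \<le>\<^sub>g l"
    and "\<And>r. r \<in> set (right_opts h) \<Longrightarrow> (\<exists>r' \<in> set (right_opts g). r =\<^sub>g r') \<or> \<not> r \<le>\<^sub>g g"
  shows "g =\<^sub>g h"
  unfolding game_eq_iff_le
  by (intro conjI game_le_by_opts) (use assms in \<open>meson game_eq_iff_le\<close>)+

lemma game_eq_if_corresponding_opts:
  assumes "set (left_opts g) = f ` L" "set (left_opts h) = f' ` L"
    and "set (right_opts g) = f ` R" "set (right_opts h) = f' ` R"
    and "\<And>v. v \<in> L \<union> R \<Longrightarrow> f v =\<^sub>g f' v"
  shows "g =\<^sub>g h"
  by (rule game_eq_by_opts; unfold assms(1-4); blast intro: assms(5) game_eq_sym)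

lemma gneg_le_gneg_iff: "gneg y \<le>\<^sub>g gneg x \<longleftrightarrow> x \<le>\<^sub>g y"
proof (induction "size x + size y" arbitrary: x y rule: less_induct)
  case less
  obtain xl xr where x: "x = G xl xr" by (cases x)
  obtain yl yr where y: "y = G yl yr" by (cases y)
  have "gneg l \<le>\<^sub>g gneg y \<longleftrightarrow> y \<le>\<^sub>g l" if "l \<in> set xl" for l
    using less[of y l] size_left_opt[of l x] that x by auto
  moreover have "gneg x \<le>\<^sub>g gneg r \<longleftrightarrow> r \<le>\<^sub>g x" if "r \<in> set yr" for r
    using less[of r x] size_right_opt[of r y] that y by auto
  ultimately show ?case
    by (subst (1 2) game_le.simps) (auto simp: x y)
qed

lemma game_eq_gneg: "x =\<^sub>g y \<Longrightarrow> gneg x =\<^sub>g gneg y"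
  by (simp add: game_eq_iff_le gneg_le_gneg_iff)

lemma gplus_zero_right: "gplus x zero_g = x"
  by (induction x) (simp add: zero_g_def map_idI)

lemma gneg_gplus: "gneg (gplus x y) = gplus (gneg x) (gneg y)"
proof (induction "size x + size y" arbitrary: x y rule: less_induct)
  case less
  obtain xl xr where x: "x = G xl xr" by (cases x)
  obtain yl yr where y: "y = G yl yr" by (cases y)
  have "gneg (gplus l y) = gplus (gneg l) (gneg y)" if "l \<in> set xl \<union> set xr" for l
    using less[of l y] size_left_opt[of l x] size_right_opt[of l x] that x by auto
  moreover have "gneg (gplus x r) = gplus (gneg x) (gneg r)" if "r \<in> set yl \<union> set yr" for r
    using less[of x r] size_left_opt[of r y] size_right_opt[of r y] that y by auto
  ultimately show ?case by (simp add: x y)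
qed

lemma game_eq_star_if_opts_zero:
  "set (left_opts g) = {zero_g} \<Longrightarrow> set (right_opts g) = {zero_g} \<Longrightarrow> g =\<^sub>g star_g"
  by (rule game_eq_by_opts) (auto simp: star_g_def game_eq_refl)

lemma zero_not_le_star: "\<not> zero_g \<le>\<^sub>g star_g"
  by (rule not_le_if_right_opt_le[of zero_g]) (simp_all add: star_g_def game_le_refl)

lemma star_not_le_zero: "\<not> star_g \<le>\<^sub>g zero_g"
  by (rule not_le_if_le_left_opt[of zero_g]) (simp_all add: star_g_def game_le_refl)

lemma star_plus_star: "gplus star_g star_g =\<^sub>g zero_g"
proof -
  have "gplus star_g star_g = G [star_g, star_g] [star_g, star_g]"
    by (simp add: star_g_def zero_g_def)
  then show ?thesis
    using zero_not_le_star star_not_le_zero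
    by (intro game_eq_by_opts) (simp_all add: zero_g_def)
qed

lemma up_pow_Suc: "up_pow (Suc m) = G [up_pow m] [star_g]"
  by (cases m) (simp_all add: up_g_def)

lemma zero_le_up_pow: "zero_g \<le>\<^sub>g up_pow m"
proof (cases m)
  case (Suc k)
  show ?thesis
    by (subst game_le.simps) (simp add: Suc up_pow_Suc star_not_le_zero[unfolded zero_g_def] zero_g_def)
qed (simp add: game_le_refl)

lemma gneg_up_pow: "gneg (up_pow m) = down_pow m"
  by (induction m rule: up_pow.induct) (simp_all add: zero_g_def up_g_def down_g_def star_g_def)

section \<open>Star positions counted by their undominated leaves\<close>

text \<open>The value of a star position with \<open>a\<close>, \<open>b\<close> and \<open>c\<close> undominated leaves of colours A, B and C;
  moving to \<open>zero_g\<close> is playing the centre.\<close>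

function leaf_game :: "nat \<Rightarrow> nat \<Rightarrow> nat \<Rightarrow> pg" where
  "leaf_game a b c =
    (if a = 0 \<and> b = 0 \<and> c = 0 then zero_g
     else G (zero_g # (if 0 < a then [leaf_game (a - 1) b c] else [])
                    @ (if 0 < c then [leaf_game a b (c - 1)] else []))
            (zero_g # (if 0 < b then [leaf_game a (b - 1) c] else [])
                    @ (if 0 < c then [leaf_game a b (c - 1)] else [])))"
  by auto
termination by (relation "measure (\<lambda>(a, b, c). a + b + c)") auto

declare leaf_game.simps [simp del]

lemma leaf_game_zero: "leaf_game 0 0 0 = zero_g"
  by (simp add: leaf_game.simps)

lemma left_opts_leaf_game:
  "\<not> (a = 0 \<and> b = 0 \<and> c = 0) \<Longrightarrow> set (left_opts (leaf_game a b c)) =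
    insert zero_g ((if 0 < a then {leaf_game (a - 1) b c} else {})
                 \<union> (if 0 < c then {leaf_game a b (c - 1)} else {}))"
  by (subst leaf_game.simps) auto

lemma right_opts_leaf_game:
  "\<not> (a = 0 \<and> b = 0 \<and> c = 0) \<Longrightarrow> set (right_opts (leaf_game a b c)) =
    insert zero_g ((if 0 < b then {leaf_game a (b - 1) c} else {})
                 \<union> (if 0 < c then {leaf_game a b (c - 1)} else {}))"
  by (subst leaf_game.simps) auto

lemma gneg_leaf_game: "gneg (leaf_game a b c) = leaf_game b a c"
proof (induction "a + b + c" arbitrary: a b c rule: less_induct)
  case less
  then show ?case
    by (subst (1 2) leaf_game.simps) (auto simp: zero_g_def)
qed

lemma leaf_game_eq_star:
  "leaf_game 1 0 0 =\<^sub>g star_g" "leaf_game 0 1 0 =\<^sub>g star_g" "leaf_game 0 0 1 =\<^sub>g star_g"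
  by (simp_all add: game_eq_star_if_opts_zero left_opts_leaf_game right_opts_leaf_game leaf_game_zero)

lemma leaf_game_single_A_C_le:
  "leaf_game 1 0 0 \<le>\<^sub>g leaf_game 0 0 1" "leaf_game 0 0 1 \<le>\<^sub>g leaf_game 1 0 0"
  using leaf_game_eq_star by (meson game_eq_iff_le game_le_trans)+

lemma leaf_game_single_C_not_le_AB: "\<not> leaf_game 0 0 1 \<le>\<^sub>g leaf_game 1 1 0"
  by (rule not_le_if_right_opt_le[OF _ leaf_game_single_A_C_le(1)]) (simp add: right_opts_leaf_game)

lemma leaf_game_single_A_not_le_two_C: "\<not> leaf_game 1 0 0 \<le>\<^sub>g leaf_game 0 0 2"
  by (rule not_le_if_right_opt_le[OF _ leaf_game_single_A_C_le(2)]) (simp add: right_opts_leaf_game)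

lemma leaf_game_cancel_AB_le:
  "\<not> (a = 0 \<and> b = 0 \<and> c = 0) \<Longrightarrow> leaf_game (Suc a) (Suc b) c \<le>\<^sub>g leaf_game a b c"
proof (induction "a + b + c" arbitrary: a b c rule: less_induct)
  case less
  define g h where "g = leaf_game (Suc a) (Suc b) c" and "h = leaf_game a b c"
  show ?case
    unfolding g_def[symmetric] h_def[symmetric]
  proof (rule game_le_by_opts)
    fix l assume "l \<in> set (left_opts g)"
    then consider "l = zero_g" | "l = leaf_game a (Suc b) c" | "0 < c" "l = leaf_game (Suc a) (Suc b) (c - 1)"
      by (auto simp: g_def left_opts_leaf_game split: if_splits)
    then show "(\<exists>l' \<in> set (left_opts h). l \<le>\<^sub>g l') \<or> \<not> h \<le>\<^sub>g l"
    proof cases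
      case 1
      then show ?thesis using less.prems by (auto simp: h_def left_opts_leaf_game game_le_refl)
    next
      case 2
      then have "h \<in> set (right_opts l)" by (simp add: h_def right_opts_leaf_game)
      then show ?thesis using not_right_opt_le by blast
    next
      case 3
      with less.hyps[of a b "c - 1"] leaf_game_single_C_not_le_AB show ?thesis
        by (cases "a = 0 \<and> b = 0 \<and> c = 1") (auto simp: h_def left_opts_leaf_game)
    qed
  next
    fix r assume "r \<in> set (right_opts h)"
    then consider "r = zero_g" | "0 < b" "r = leaf_game a (b - 1) c" | "0 < c" "r = leaf_game a b (c - 1)"
      using less.prems by (auto simp: h_def right_opts_leaf_game split: if_splits)
    then show "(\<exists>r' \<in> set (right_opts g). r' \<le>\<^sub>g r) \<or> \<not> r \<le>\<^sub>g g"
    proof cases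
      case 1
      then show ?thesis by (auto simp: g_def right_opts_leaf_game game_le_refl)
    next
      case 2
      with less.hyps[of a "b - 1" c] show ?thesis
        by (cases "a = 0 \<and> b = 1 \<and> c = 0")
          (auto simp: g_def right_opts_leaf_game leaf_game_zero game_le_refl)
    next
      case 3
      with less.hyps[of a b "c - 1"] show ?thesis
        by (cases "a = 0 \<and> b = 0 \<and> c = 1")
          (auto simp: g_def right_opts_leaf_game leaf_game_zero game_le_refl)
    qed
  qed
qed

lemma leaf_game_cancel_AB:
  assumes "\<not> (a = 0 \<and> b = 0 \<and> c = 0)"
  shows "leaf_game (Suc a) (Suc b) c =\<^sub>g leaf_game a b c"
proof -
  have "leaf_game (Suc b) (Suc a) c \<le>\<^sub>g leaf_game b a c"
    using assms by (intro leaf_game_cancel_AB_le) auto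
  then have "leaf_game a b c \<le>\<^sub>g leaf_game (Suc a) (Suc b) c"
    by (metis gneg_le_gneg_iff gneg_leaf_game)
  then show ?thesis
    using assms leaf_game_cancel_AB_le by (simp add: game_eq_iff_le)
qed

lemma leaf_game_cancel_AB_pairs:
  "\<not> (a = 0 \<and> b = 0 \<and> c = 0) \<Longrightarrow> leaf_game (k + a) (k + b) c =\<^sub>g leaf_game a b c"
proof (induction k)
  case (Suc k)
  then have "leaf_game (Suc (k + a)) (Suc (k + b)) c =\<^sub>g leaf_game (k + a) (k + b) c"
    by (intro leaf_game_cancel_AB) auto
  with Suc show ?case by (auto intro: game_eq_trans)
qed (simp add: game_eq_refl)

lemma leaf_game_drop_two_C:
  "0 < d \<or> 0 < c \<Longrightarrow> leaf_game d 0 (c + 2) =\<^sub>g leaf_game d 0 c"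
proof (induction "d + c" arbitrary: d c rule: less_induct)
  case less
  define g h x where "g = leaf_game d 0 (c + 2)" and "h = leaf_game d 0 c"
    and "x = leaf_game d 0 (c + 1)"
  have g_opts: "set (left_opts g) = insert zero_g (insert x (if 0 < d then {leaf_game (d - 1) 0 (c + 2)} else {}))"
    "set (right_opts g) = {zero_g, x}"
    by (auto simp: g_def x_def left_opts_leaf_game right_opts_leaf_game)
  have h_opts: "set (left_opts h) = insert zero_g ((if 0 < d then {leaf_game (d - 1) 0 c} else {})
      \<union> (if 0 < c then {leaf_game d 0 (c - 1)} else {}))"
    "set (right_opts h) = insert zero_g (if 0 < c then {leaf_game d 0 (c - 1)} else {})"
    using less.prems by (auto simp: h_def left_opts_leaf_game right_opts_leaf_game)
  have "h \<in> set (left_opts x)" "h \<in> set (right_opts x)"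
    by (simp_all add: h_def x_def left_opts_leaf_game right_opts_leaf_game)
  then have x_fuzzy: "\<not> h \<le>\<^sub>g x" "\<not> x \<le>\<^sub>g h"
    using not_le_left_opt not_right_opt_le by blast+
  have A: "leaf_game (d - 1) 0 (c + 2) =\<^sub>g leaf_game (d - 1) 0 c
      \<or> d = 1 \<and> c = 0 \<and> \<not> h \<le>\<^sub>g leaf_game (d - 1) 0 (c + 2)" if "0 < d"
    using less.hyps[of "d - 1" c] that leaf_game_single_A_not_le_two_C
    by (cases "d = 1 \<and> c = 0") (auto simp: h_def numeral_2_eq_2)
  have C: "x =\<^sub>g leaf_game d 0 (c - 1) \<or> d = 0 \<and> c = 1" if "0 < c"
    using less.hyps[of d "c - 1"] that by (cases "d = 0 \<and> c = 1") (auto simp: x_def)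
  show ?case
    unfolding g_def[symmetric] h_def[symmetric]
  proof (rule game_eq_by_opts)
    fix l assume "l \<in> set (left_opts g)"
    then show "(\<exists>l' \<in> set (left_opts h). l =\<^sub>g l') \<or> \<not> h \<le>\<^sub>g l"
      using A x_fuzzy by (auto simp: g_opts h_opts game_eq_refl split: if_splits)
  next
    fix r assume "r \<in> set (right_opts g)"
    then show "(\<exists>r' \<in> set (right_opts h). r =\<^sub>g r') \<or> \<not> r \<le>\<^sub>g h"
      using x_fuzzy by (auto simp: g_opts h_opts game_eq_refl)
  next
    fix l assume "l \<in> set (left_opts h)"
    then show "(\<exists>l' \<in> set (left_opts g). l =\<^sub>g l') \<or> \<not> g \<le>\<^sub>g l"
      using A C by (auto simp: g_opts h_opts leaf_game_zero game_eq_refl dest: game_eq_sym split: if_splits)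
  next
    fix r assume "r \<in> set (right_opts h)"
    then show "(\<exists>r' \<in> set (right_opts g). r =\<^sub>g r') \<or> \<not> r \<le>\<^sub>g g"
      using C by (auto simp: g_opts h_opts leaf_game_zero game_eq_refl dest: game_eq_sym split: if_splits)
  qed
qed

lemma leaf_game_only_A: "leaf_game (Suc m) 0 0 =\<^sub>g gplus (up_pow m) star_g"
proof (induction m)
  case 0
  have "gplus (up_pow 0) star_g = star_g" by (simp add: zero_g_def star_g_def)
  then show ?case using leaf_game_eq_star(1) by simp
next
  case (Suc m)
  define g h where "g = leaf_game (Suc (Suc m)) 0 0" and "h = gplus (up_pow (Suc m)) star_g"
  have g_opts: "set (left_opts g) = {zero_g, leaf_game (Suc m) 0 0}" "set (right_opts g) = {zero_g}"
    by (simp_all add: g_def left_opts_leaf_game right_opts_leaf_game)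
  have h_opts: "set (left_opts h) = {gplus (up_pow m) star_g, up_pow (Suc m)}"
    "set (right_opts h) = {gplus star_g star_g, up_pow (Suc m)}"
    by (simp_all add: h_def up_pow_Suc star_g_def gplus_zero_right)
  have "\<not> h \<le>\<^sub>g zero_g"
    by (rule not_le_if_le_left_opt[of "up_pow (Suc m)"]) (simp_all add: h_opts zero_le_up_pow)
  moreover have "\<not> zero_g \<le>\<^sub>g h"
    by (rule not_le_if_right_opt_le[of "gplus star_g star_g"])
      (use star_plus_star in \<open>simp_all add: h_opts game_eq_iff_le\<close>)
  moreover have "star_g \<le>\<^sub>g g"
    by (subst game_le.simps) (simp add: g_opts not_le_left_opt zero_not_le_star[unfolded star_g_def] star_g_def)
  then have "\<not> g \<le>\<^sub>g up_pow (Suc m)"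
    by (rule not_le_if_right_opt_le[rotated]) (simp add: up_pow_Suc)
  moreover have "\<not> gplus star_g star_g \<le>\<^sub>g g" "\<not> up_pow (Suc m) \<le>\<^sub>g g"
    by (rule not_le_if_right_opt_le[of zero_g], simp add: g_opts,
        use star_plus_star zero_le_up_pow in \<open>simp add: game_eq_iff_le\<close>)+
  ultimately show ?case
    unfolding g_def[symmetric] h_def[symmetric]
    by (intro game_eq_by_opts) (auto simp: g_opts h_opts intro: Suc.IH game_eq_sym[OF Suc.IH])
qed

lemma leaf_game_one_C_le: "leaf_game d 0 1 \<le>\<^sub>g leaf_game (Suc d) 0 0"
proof (induction d)
  case 0
  show ?case using leaf_game_single_A_C_le(2) by simp
next
  case (Suc d)
  have "set (left_opts (leaf_game (Suc d) 0 1)) = {zero_g, leaf_game d 0 1, leaf_game (Suc d) 0 0}"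
    "set (right_opts (leaf_game (Suc d) 0 1)) = {zero_g, leaf_game (Suc d) 0 0}"
    "set (left_opts (leaf_game (Suc (Suc d)) 0 0)) = {zero_g, leaf_game (Suc d) 0 0}"
    "set (right_opts (leaf_game (Suc (Suc d)) 0 0)) = {zero_g}"
    by (auto simp: left_opts_leaf_game right_opts_leaf_game)
  with Suc.IH show ?case
    by (intro game_le_by_opts) (auto intro: game_le_refl)
qed

lemma leaf_game_one_C:
  "leaf_game d 0 1 =\<^sub>g G [zero_g, leaf_game d 0 0] [zero_g, leaf_game d 0 0]"
proof (rule game_eq_by_opts)
  fix l assume "l \<in> set (left_opts (leaf_game d 0 1))"
  moreover have "\<not> G [zero_g, leaf_game d 0 0] [zero_g, leaf_game d 0 0] \<le>\<^sub>g leaf_game (d - 1) 0 1"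
    if "0 < d"
    using leaf_game_one_C_le[of "d - 1"] that by (intro not_le_if_le_left_opt) auto
  ultimately show "(\<exists>l' \<in> set (left_opts (G [zero_g, leaf_game d 0 0] [zero_g, leaf_game d 0 0])). l =\<^sub>g l')
      \<or> \<not> G [zero_g, leaf_game d 0 0] [zero_g, leaf_game d 0 0] \<le>\<^sub>g l"
    by (auto simp: left_opts_leaf_game intro: game_eq_refl split: if_splits)
qed (auto simp: left_opts_leaf_game right_opts_leaf_game intro: game_eq_refl)

lemma zero_pair_game_cong:
  "x =\<^sub>g y \<Longrightarrow> G [zero_g, x] [zero_g, x] =\<^sub>g G [zero_g, y] [zero_g, y]"
  by (rule game_eq_by_opts) (auto intro: game_eq_refl game_eq_sym)

section \<open>Domination positions on the star\<close>

lemma dom_pos_dominated: "{..<N} \<subseteq> D \<Longrightarrow> dom_pos k N adj col D = zero_g"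
  by (cases k) (auto simp: zero_g_def cnbhd_def filter_empty_conv)

lemma left_opts_dom_pos:
  "set (left_opts (dom_pos (Suc k) N adj col D)) = (\<lambda>v. dom_pos k N adj col (D \<union> cnbhd N adj v))
     ` {v. v < N \<and> col v \<in> {ColA, ColC} \<and> \<not> cnbhd N adj v \<subseteq> D}"
  by auto

lemma right_opts_dom_pos:
  "set (right_opts (dom_pos (Suc k) N adj col D)) = (\<lambda>v. dom_pos k N adj col (D \<union> cnbhd N adj v))
     ` {v. v < N \<and> col v \<in> {ColB, ColC} \<and> \<not> cnbhd N adj v \<subseteq> D}"
  by auto

lemma cnbhd_star_centre: "0 < N \<Longrightarrow> cnbhd N star_adj 0 = {..<N}"
  by (auto simp: cnbhd_def star_adj_def)

lemma cnbhd_star_leaf: "0 < v \<Longrightarrow> v < N \<Longrightarrow> cnbhd N star_adj v = {0, v}"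
  by (auto simp: cnbhd_def star_adj_def)

text \<open>Every closed neighbourhood contains the centre, so the initial position behaves like the one
  in which only the centre is dominated.\<close>

lemma dom_pos_star_empty:
  assumes "1 < N"
  shows "dom_pos k N star_adj col {} = dom_pos k N star_adj col {0}"
proof (cases k)
  case (Suc k')
  have "0 \<in> cnbhd N star_adj v" "(if v = 0 then 1 else v) \<in> cnbhd N star_adj v" if "v < N" for v
    using that assms by (auto simp: cnbhd_def star_adj_def)
  then have "insert 0 (cnbhd N star_adj v) = cnbhd N star_adj v"
    "cnbhd N star_adj v \<noteq> {}" "\<not> cnbhd N star_adj v \<subseteq> {0}" if "v < N" for v
    using that by (auto, metis empty_iff singletonD subsetD zero_neq_one)
  then show ?thesis
    unfolding Suc dom_pos.simps
    by (intro arg_cong2[where f = G] map_cong filter_cong refl) auto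
qed simp

definition undominated :: "nat \<Rightarrow> nat \<Rightarrow> nat set \<Rightarrow> nat" where
  "undominated l h D = card ({l<..h} - D)"

lemma undominated_insert:
  "undominated l h (insert v D) =
    (if v \<in> {l<..h} - D then undominated l h D - 1 else undominated l h D)"
proof -
  have "{l<..h} - insert v D = ({l<..h} - D) - {v}" by blast
  then show ?thesis by (simp add: undominated_def card_Diff_singleton_if)
qed

lemma undominated_eq_0_iff: "undominated l h D = 0 \<longleftrightarrow> {l<..h} \<subseteq> D"
  by (auto simp: undominated_def)

lemma undominated_pos_iff: "0 < undominated l h D \<longleftrightarrow> \<not> {l<..h} \<subseteq> D"
  by (simp add: undominated_eq_0_iff flip: neq0_conv)

lemma star_leaves_split: "{0<..a + b + c} = {0<..a} \<union> {a<..a + b} \<union> {a + b<..a + b + c}"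
  for a b c :: nat
  by (simp add: ivl_disj_un_two(6))

definition undominated_leaf_game :: "nat \<Rightarrow> nat \<Rightarrow> nat \<Rightarrow> nat set \<Rightarrow> pg" where
  "undominated_leaf_game a b c D =
     leaf_game (undominated 0 a D) (undominated a (a + b) D) (undominated (a + b) (a + b + c) D)"

lemma undominated_leaf_game_all_dominated:
  "{0<..a + b + c} \<subseteq> D \<Longrightarrow> undominated_leaf_game a b c D = zero_g"
  by (simp add: star_leaves_split undominated_leaf_game_def undominated_eq_0_iff[THEN iffD2]
      leaf_game_zero)

lemma undominated_leaf_game_opts:
  assumes "\<not> {0<..a + b + c} \<subseteq> D"
  defines "mv \<equiv> \<lambda>v. if v = 0 then zero_g else undominated_leaf_game a b c (insert v D)"
  shows "set (left_opts (undominated_leaf_game a b c D))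
      = mv ` insert 0 (({0<..a} \<union> {a + b<..a + b + c}) - D)"
    and "set (right_opts (undominated_leaf_game a b c D))
      = mv ` insert 0 (({a<..a + b} \<union> {a + b<..a + b + c}) - D)"
proof -
  define ca cb cc where "ca = undominated 0 a D" and "cb = undominated a (a + b) D"
    and "cc = undominated (a + b) (a + b + c) D"
  have const_image: "mv ` (X - D) = (if X - D = {} then {} else {x})"
    if "\<And>v. v \<in> X - D \<Longrightarrow> mv v = x" for X x
    using that by auto
  have mv_A: "mv v = leaf_game (ca - 1) cb cc" if "v \<in> {0<..a} - D" for v
    using that by (simp add: mv_def undominated_leaf_game_def ca_def cb_def cc_def undominated_insert)
  have mv_B: "mv v = leaf_game ca (cb - 1) cc" if "v \<in> {a<..a + b} - D" for v
    using that by (simp add: mv_def undominated_leaf_game_def ca_def cb_def cc_def undominated_insert)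
  have mv_C: "mv v = leaf_game ca cb (cc - 1)" if "v \<in> {a + b<..a + b + c} - D" for v
    using that by (simp add: mv_def undominated_leaf_game_def ca_def cb_def cc_def undominated_insert)
  have "mv ` ({0<..a} - D) = (if 0 < ca then {leaf_game (ca - 1) cb cc} else {})"
    "mv ` ({a<..a + b} - D) = (if 0 < cb then {leaf_game ca (cb - 1) cc} else {})"
    "mv ` ({a + b<..a + b + c} - D) = (if 0 < cc then {leaf_game ca cb (cc - 1)} else {})"
    using const_image[of "{0<..a}" "leaf_game (ca - 1) cb cc"]
      const_image[of "{a<..a + b}" "leaf_game ca (cb - 1) cc"]
      const_image[of "{a + b<..a + b + c}" "leaf_game ca cb (cc - 1)"]
    by (simp_all add: mv_A mv_B mv_C ca_def cb_def cc_def undominated_pos_iff)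
  moreover have "\<not> (ca = 0 \<and> cb = 0 \<and> cc = 0)"
    using assms(1) by (simp add: star_leaves_split ca_def cb_def cc_def undominated_eq_0_iff)
  moreover have "mv 0 = zero_g" by (simp add: mv_def)
  ultimately show "set (left_opts (undominated_leaf_game a b c D))
      = mv ` insert 0 (({0<..a} \<union> {a + b<..a + b + c}) - D)"
    and "set (right_opts (undominated_leaf_game a b c D))
      = mv ` insert 0 (({a<..a + b} \<union> {a + b<..a + b + c}) - D)"
    by (simp_all add: undominated_leaf_game_def ca_def[symmetric] cb_def[symmetric] cc_def[symmetric]
        left_opts_leaf_game right_opts_leaf_game Un_Diff image_Un)
qed

lemma star_playable_vertices:
  assumes "0 \<in> D" "\<not> {0<..a + b + c} \<subseteq> D"
  shows "{v. v < a + b + c + 1 \<and> star_col a b v \<in> {ColA, ColC}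
            \<and> \<not> cnbhd (a + b + c + 1) star_adj v \<subseteq> D}
      = insert 0 (({0<..a} \<union> {a + b<..a + b + c}) - D)"
    and "{v. v < a + b + c + 1 \<and> star_col a b v \<in> {ColB, ColC}
            \<and> \<not> cnbhd (a + b + c + 1) star_adj v \<subseteq> D}
      = insert 0 (({a<..a + b} \<union> {a + b<..a + b + c}) - D)"
  using assms by (auto simp: star_col_def cnbhd_star_centre cnbhd_star_leaf lessThan_Suc_atMost)

lemma dom_pos_star_opts:
  fixes a b c k :: nat
  assumes "0 \<in> D" "\<not> {0<..a + b + c} \<subseteq> D"
  defines "N \<equiv> a + b + c + 1"
  defines "f \<equiv> \<lambda>v. dom_pos k N star_adj (star_col a b) (D \<union> cnbhd N star_adj v)"
  shows "set (left_opts (dom_pos (Suc k) N star_adj (star_col a b) D))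
      = f ` insert 0 (({0<..a} \<union> {a + b<..a + b + c}) - D)"
    and "set (right_opts (dom_pos (Suc k) N star_adj (star_col a b) D))
      = f ` insert 0 (({a<..a + b} \<union> {a + b<..a + b + c}) - D)"
  unfolding left_opts_dom_pos right_opts_dom_pos f_def N_def star_playable_vertices[OF assms(1,2)]
  by (rule refl)+

text \<open>The fuel \<open>k\<close> of \<open>dom_pos\<close> only needs to bound the number of undominated leaves: a leaf move
  dominates one new leaf, and the centre move ends the game.\<close>

lemma dom_pos_star_eq_leaf_game:
  fixes a b c :: nat
  defines "N \<equiv> a + b + c + 1"
  assumes "0 \<in> D" and "undominated 0 (a + b + c) D \<le> k"
  shows "dom_pos k N star_adj (star_col a b) D =\<^sub>g undominated_leaf_game a b c D"
  using assms(2,3)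
proof (induction k arbitrary: D)
  case 0
  then have "{0<..a + b + c} \<subseteq> D" by (simp add: undominated_eq_0_iff)
  then show ?case by (simp add: undominated_leaf_game_all_dominated zero_g_def game_eq_refl)
next
  case (Suc k)
  show ?case
  proof (cases "{0<..a + b + c} \<subseteq> D")
    case True
    moreover have "{..<N} = insert 0 {0<..a + b + c}" by (auto simp: N_def)
    ultimately have "{..<N} \<subseteq> D" using Suc.prems(1) by simp
    with True show ?thesis
      by (simp only: dom_pos_dominated undominated_leaf_game_all_dominated game_eq_refl)
  next
    case False
    define f where "f = (\<lambda>v. dom_pos k N star_adj (star_col a b) (D \<union> cnbhd N star_adj v))"
    define mv where "mv = (\<lambda>v. if v = 0 then zero_g else undominated_leaf_game a b c (insert v D))"
    have f_mv: "f v =\<^sub>g mv v" if "v \<in> insert 0 ({0<..a + b + c} - D)" for v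
    proof (cases "v = 0")
      case True
      then show ?thesis
        by (simp add: f_def mv_def N_def cnbhd_star_centre dom_pos_dominated game_eq_refl)
    next
      case False
      with that have v: "v \<in> {0<..a + b + c} - D" by simp
      then have "D \<union> cnbhd N star_adj v = insert v D"
        using Suc.prems(1) by (auto simp: N_def cnbhd_star_leaf)
      moreover have "undominated 0 (a + b + c) (insert v D) \<le> k"
        using v Suc.prems(2) by (simp add: undominated_insert)
      ultimately show ?thesis
        using Suc.IH[of "insert v D"] Suc.prems(1) False by (simp add: f_def mv_def)
    qed
    note dom_pos_opts = dom_pos_star_opts[OF Suc.prems(1) False, of k, folded N_def f_def]
    note leaf_game_opts = undominated_leaf_game_opts[OF False, folded mv_def]
    show ?thesis
      by (rule game_eq_if_corresponding_opts[OF dom_pos_opts(1) leaf_game_opts(1)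
            dom_pos_opts(2) leaf_game_opts(2)])
        (use f_mv in auto)
  qed
qed

lemma undominated_centre_only: "undominated l h {0} = h - l"
proof -
  have "{l<..h} - {0} = {l<..h}" by auto
  then show ?thesis by (simp add: undominated_def)
qed

lemma star_game_eq_leaf_game:
  assumes "1 \<le> a + b + c"
  shows "star_game a b c =\<^sub>g leaf_game a b c"
proof -
  have "star_game a b c = dom_pos (a + b + c + 1) (a + b + c + 1) star_adj (star_col a b) {0}"
    unfolding star_game_def dom_game_def using assms by (intro dom_pos_star_empty) linarith
  also have "\<dots> =\<^sub>g undominated_leaf_game a b c {0}"
    by (rule dom_pos_star_eq_leaf_game) (simp_all add: undominated_centre_only)
  also have "undominated_leaf_game a b c {0} = leaf_game a b c"
    by (simp add: undominated_leaf_game_def undominated_centre_only)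
  finally show ?thesis .
qed

section \<open>Values of the leaf games\<close>

lemma leaf_game_cancel_all_B:
  "b \<le> a \<Longrightarrow> \<not> (a = b \<and> c = 0) \<Longrightarrow> leaf_game a b c =\<^sub>g leaf_game (a - b) 0 c"
  using leaf_game_cancel_AB_pairs[of "a - b" 0 c b] by simp

lemma leaf_game_drop_C_pairs:
  "0 < d \<or> 0 < c \<Longrightarrow> leaf_game d 0 (c + 2 * k) =\<^sub>g leaf_game d 0 c"
proof (induction k)
  case (Suc k)
  then have "leaf_game d 0 (c + 2 * k + 2) =\<^sub>g leaf_game d 0 (c + 2 * k)"
    by (intro leaf_game_drop_two_C) auto
  with Suc show ?case by (auto intro: game_eq_trans)
qed (simp add: game_eq_refl)

lemma leaf_game_two_C_eq_AB: "leaf_game 0 0 2 =\<^sub>g leaf_game 1 1 0"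
proof -
  have "set (left_opts (leaf_game 0 0 2)) = {zero_g, leaf_game 0 0 1}"
    "set (right_opts (leaf_game 0 0 2)) = {zero_g, leaf_game 0 0 1}"
    "set (left_opts (leaf_game 1 1 0)) = {zero_g, leaf_game 0 1 0}"
    "set (right_opts (leaf_game 1 1 0)) = {zero_g, leaf_game 1 0 0}"
    by (simp_all add: left_opts_leaf_game right_opts_leaf_game)
  moreover have "leaf_game 0 0 1 =\<^sub>g leaf_game 0 1 0" "leaf_game 0 0 1 =\<^sub>g leaf_game 1 0 0"
    using leaf_game_eq_star by (meson game_eq_sym game_eq_trans)+
  ultimately show ?thesis
    by (intro game_eq_by_opts) (auto intro: game_eq_refl game_eq_sym)
qed

lemma leaf_game_even_C_more_A:
  assumes "b < a" "even c"
  shows "leaf_game a b c =\<^sub>g leaf_game a b 0"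
proof -
  obtain k where c: "c = 0 + 2 * k" using assms(2) by auto
  have "leaf_game a b c =\<^sub>g leaf_game (a - b) 0 c"
    using assms(1) by (simp add: leaf_game_cancel_all_B)
  also have "\<dots> =\<^sub>g leaf_game (a - b) 0 0"
    using assms(1) c leaf_game_drop_C_pairs[of "a - b" 0 k] by simp
  also have "\<dots> =\<^sub>g leaf_game a b 0"
    using assms(1) game_eq_sym[OF leaf_game_cancel_all_B[of b a 0]] by simp
  finally show ?thesis .
qed

lemma leaf_game_even_C_balanced:
  assumes "0 < a" "even c"
  shows "leaf_game a a c =\<^sub>g leaf_game a a 0"
proof (cases "c = 0")
  case False
  obtain m where "c = 2 * m" using assms(2) by (rule evenE)
  with False obtain k where c: "c = 2 + 2 * k" by (cases m) auto
  have "leaf_game a a c =\<^sub>g leaf_game 0 0 c"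
    using False leaf_game_cancel_all_B[of a a c] by simp
  also have "\<dots> =\<^sub>g leaf_game 0 0 2"
    using leaf_game_drop_C_pairs[of 0 2 k] c by simp
  also have "\<dots> =\<^sub>g leaf_game 1 1 0"
    by (rule leaf_game_two_C_eq_AB)
  also have "\<dots> =\<^sub>g leaf_game a a 0"
    using assms(1) game_eq_sym[OF leaf_game_cancel_AB_pairs[of 1 1 0 "a - 1"]] by simp
  finally show ?thesis .
qed (simp add: game_eq_refl)

lemma leaf_game_even_C:
  assumes "0 < a + b" "even c"
  shows "leaf_game a b c =\<^sub>g leaf_game a b 0"
proof (cases a b rule: linorder_cases)
  case less
  then have "gneg (leaf_game b a c) =\<^sub>g gneg (leaf_game b a 0)"
    using assms(2) by (intro game_eq_gneg leaf_game_even_C_more_A)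
  then show ?thesis by (simp add: gneg_leaf_game)
next
  case equal
  then show ?thesis using assms leaf_game_even_C_balanced by simp
next
  case greater
  then show ?thesis using assms(2) by (rule leaf_game_even_C_more_A)
qed

lemma leaf_game_odd_C_balanced: "odd c \<Longrightarrow> leaf_game a a c =\<^sub>g star_g"
proof -
  assume "odd c"
  then obtain k where c: "c = 1 + 2 * k" by (metis oddE add.commute)
  have "leaf_game a a c =\<^sub>g leaf_game 0 0 c"
    using leaf_game_cancel_all_B[of a a c] c by simp
  also have "\<dots> =\<^sub>g leaf_game 0 0 1"
    using leaf_game_drop_C_pairs[of 0 1 k] c by simp
  also have "\<dots> =\<^sub>g star_g"
    by (rule leaf_game_eq_star)
  finally show ?thesis .
qed

lemma leaf_game_odd_C_more_A:
  assumes "b < a" "odd c"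
  shows "leaf_game a b c =\<^sub>g
    G [zero_g, gplus (up_pow (a - b - 1)) star_g] [zero_g, gplus (up_pow (a - b - 1)) star_g]"
proof -
  obtain k where c: "c = 1 + 2 * k" using assms(2) by (metis oddE add.commute)
  have "leaf_game a b c =\<^sub>g leaf_game (a - b) 0 c"
    using assms(1) c by (simp add: leaf_game_cancel_all_B)
  also have "\<dots> =\<^sub>g leaf_game (a - b) 0 1"
    using leaf_game_drop_C_pairs[of "a - b" 1 k] c by simp
  also have "\<dots> =\<^sub>g G [zero_g, leaf_game (a - b) 0 0] [zero_g, leaf_game (a - b) 0 0]"
    by (rule leaf_game_one_C)
  also have "\<dots> =\<^sub>g G [zero_g, gplus (up_pow (a - b - 1)) star_g] [zero_g, gplus (up_pow (a - b - 1)) star_g]"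
    using leaf_game_only_A[of "a - b - 1"] assms(1) by (intro zero_pair_game_cong) (simp add: Suc_diff_Suc)
  finally show ?thesis .
qed

lemma leaf_game_odd_C_more_B:
  assumes "a < b" "odd c"
  shows "leaf_game a b c =\<^sub>g
    G [zero_g, gplus (down_pow (b - a - 1)) star_g] [zero_g, gplus (down_pow (b - a - 1)) star_g]"
  using game_eq_gneg[OF leaf_game_odd_C_more_A[OF assms]]
  by (simp add: gneg_leaf_game gneg_gplus gneg_up_pow zero_g_def star_g_def)

lemma leaf_game_odd_C_adjacent:
  assumes "a = b + 1 \<or> b = a + 1" "odd c"
  shows "leaf_game a b c =\<^sub>g star2_g"
proof -
  have "G [zero_g, gplus (up_pow 0) star_g] [zero_g, gplus (up_pow 0) star_g] = star2_g"
    "G [zero_g, gplus (down_pow 0) star_g] [zero_g, gplus (down_pow 0) star_g] = star2_g"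
    by (simp_all add: star2_g_def star_g_def zero_g_def)
  with assms leaf_game_odd_C_more_A[of b a c] leaf_game_odd_C_more_B[of a b c] show ?thesis
    by (auto simp del: up_pow.simps down_pow.simps)
qed

theorem theorem9:
  fixes a b c :: nat
  assumes "a + b \<ge> 1" and "c \<ge> 1"
  shows "(even c \<longrightarrow> star_game a b c =\<^sub>g star_game a b 0)
       \<and> (odd c \<longrightarrow>
            (a = b \<longrightarrow> star_game a b c =\<^sub>g star_g)
          \<and> ((a = b + 1 \<or> b = a + 1) \<longrightarrow> star_game a b c =\<^sub>g star2_g)
          \<and> (a \<ge> b + 2 \<longrightarrow> star_game a b c =\<^sub>g
                G [zero_g, gplus (up_pow (a - b - 1)) star_g] [zero_g, gplus (up_pow (a - b - 1)) star_g])
          \<and> (b \<ge> a + 2 \<longrightarrow> star_game a b c =\<^sub>g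
                G [zero_g, gplus (down_pow (b - a - 1)) star_g] [zero_g, gplus (down_pow (b - a - 1)) star_g]))"
proof -
  have star_game_eqI: "star_game a b c =\<^sub>g g" if "leaf_game a b c =\<^sub>g g" for g
    by (rule game_eq_trans[OF star_game_eq_leaf_game that]) (use assms(1) in simp)
  have even: "leaf_game a b c =\<^sub>g star_game a b 0" if "even c"
  proof -
    have "leaf_game a b c =\<^sub>g leaf_game a b 0"
      using assms(1) that by (intro leaf_game_even_C) linarith+
    also have "\<dots> =\<^sub>g star_game a b 0"
      using assms(1) game_eq_sym[OF star_game_eq_leaf_game[of a b 0]] by simp
    finally show ?thesis .
  qed
  show ?thesis
    by (intro conjI impI; rule star_game_eqI)
      (use even leaf_game_odd_C_balanced leaf_game_odd_C_adjacent
        leaf_game_odd_C_more_A leaf_game_odd_C_more_B in auto)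
qed

end
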